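(* Let $\sigma : \mathcal{S} \to \mathcal{A}^\perp \parallel \mathcal{B}$ and $\tau : \mathcal{T} \to \mathcal{B}^\perp \parallel \mathcal{C}$ be negative single-threaded $\sim$-strategies with $\mathcal{A}, \mathcal{B}, \mathcal{C}$ negative thin concurrent games. Then, $\tau \odot \sigma : \mathcal{T} \odot \mathcal{S} \to \mathcal{A}^\perp \parallel \mathcal{C}$ is negative and single-threaded.
   Context: $e \rightarrow e'$ denotes immediate causal dependency ($e<e'$ with nothing strictly between). A $\sim$-strategy $\sigma:\mathcal{S}\to\mathcal{A}$ is a map of essps (event structures with symmetry and polarities) which is courteous (if $s_1 \rightarrow s_2$ with $\mathrm{pol}(s_1)=+$ or $\mathrm{pol}(s_2)=-$ then $\sigma s_1 \rightarrow \sigma s_2$), strong-receptive (extensions by pairs of negative events of images of isomorphisms of $\mathcal{S}$ lift uniquely), and thin. A thin concurrent game is a race-preserving thin-style essp with receptive thin sub-symmetries; it (or an esp) is negative if all its minimal events are negative, and a strategy is negative if $S$ is. An esp is single-threaded if (1) for every $a$, $[a]$ has exactly one minimal event, and (2) whenever a configuration $x$ extends by $a_1$ and by $a_2$ but $x\cup\{a_1,a_2\}$ is not a configuration, then $[a_1]\cap[a_2]\neq\emptyset$; a $\sim$-strategy is single-threaded if $\mathcal{S}$ is. The composition $\tau\odot\sigma$ is the pullback $(\mathcal{S}\parallel\mathcal{C})\circledast(\mathcal{A}\parallel\mathcal{T})$ of $\sigma\parallel\mathcal{C}$ and $\mathcal{A}\parallel\tau$ projected onto events not mapping to $\mathcal{B}$.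 *)

theory Defs
  imports Main
begin

record 'e es = Ev :: "'e set" Le :: "'e \<Rightarrow> 'e \<Rightarrow> bool" Con :: "'e set \<Rightarrow> bool"
record 'e esp = "'e es" + pol :: "'e \<Rightarrow> bool"   (* True = positive, False = negative *)
record 'e essp = "'e esp" + Sym :: "('e \<times> 'e) set set"
record 'e tcg = "'e essp" + SymP :: "('e \<times> 'e) set set" SymN :: "('e \<times> 'e) set set"

definition lt :: "('e,'z) es_scheme \<Rightarrow> 'e \<Rightarrow> 'e \<Rightarrow> bool" where
  "lt E a b \<longleftrightarrow> Le E a b \<and> a \<noteq> b"

definition imm :: "('e,'z) es_scheme \<Rightarrow> 'e \<Rightarrow> 'e \<Rightarrow> bool" where
  "imm E a b \<longleftrightarrow> lt E a b \<and> \<not> (\<exists>c. lt E a c \<and> lt E c b)"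

definition down :: "('e,'z) es_scheme \<Rightarrow> 'e \<Rightarrow> 'e set" where
  "down E a = {e. Le E e a}"

definition is_es :: "('e,'z) es_scheme \<Rightarrow> bool" where
  "is_es E \<longleftrightarrow>
     (\<forall>a b. Le E a b \<longrightarrow> a \<in> Ev E \<and> b \<in> Ev E) \<and>
     (\<forall>a\<in>Ev E. Le E a a) \<and>
     (\<forall>a b. Le E a b \<and> Le E b a \<longrightarrow> a = b) \<and>
     (\<forall>a b c. Le E a b \<and> Le E b c \<longrightarrow> Le E a c) \<and>
     (\<forall>a\<in>Ev E. finite (down E a)) \<and>
     (\<forall>X. Con E X \<longrightarrow> finite X \<and> X \<subseteq> Ev E) \<and>
     Con E {} \<and>
     (\<forall>a\<in>Ev E. Con E {a}) \<and>
     (\<forall>X Y. Con E Y \<and> X \<subseteq> Y \<longrightarrow> Con E X) \<and>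
     (\<forall>X a b. Con E X \<and> b \<in> X \<and> Le E a b \<longrightarrow> Con E (insert a X))"

definition conf :: "('e,'z) es_scheme \<Rightarrow> 'e set set" where
  "conf E = {x. finite x \<and> x \<subseteq> Ev E \<and> (\<forall>b\<in>x. \<forall>a. Le E a b \<longrightarrow> a \<in> x) \<and> Con E x}"

definition extends :: "('e,'z) es_scheme \<Rightarrow> 'e set \<Rightarrow> 'e \<Rightarrow> bool" where
  "extends E x a \<longleftrightarrow> x \<in> conf E \<and> a \<notin> x \<and> insert a x \<in> conf E"

definition minimal :: "('e,'z) es_scheme \<Rightarrow> 'e \<Rightarrow> bool" where
  "minimal E a \<longleftrightarrow> a \<in> Ev E \<and> (\<forall>b. Le E b a \<longrightarrow> b = a)"

definition negative :: "('e,'z) esp_scheme \<Rightarrow> bool" where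
  "negative E \<longleftrightarrow> (\<forall>a. minimal E a \<longrightarrow> \<not> pol E a)"

definition single_threaded :: "('e,'z) es_scheme \<Rightarrow> bool" where
  "single_threaded E \<longleftrightarrow>
     (\<forall>a\<in>Ev E. \<exists>!m. m \<in> down E a \<and> minimal E m) \<and>
     (\<forall>x a1 a2. extends E x a1 \<and> extends E x a2 \<and> insert a1 (insert a2 x) \<notin> conf E
        \<longrightarrow> down E a1 \<inter> down E a2 \<noteq> {})"

definition is_cbij :: "('e,'z) es_scheme \<Rightarrow> ('e \<times> 'e) set \<Rightarrow> bool" where
  "is_cbij E \<theta> \<longleftrightarrow> Domain \<theta> \<in> conf E \<and> Range \<theta> \<in> conf E \<and>
     (\<forall>a b b'. (a,b) \<in> \<theta> \<and> (a,b') \<in> \<theta> \<longrightarrow> b = b') \<and>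
     (\<forall>a a' b. (a,b) \<in> \<theta> \<and> (a',b) \<in> \<theta> \<longrightarrow> a = a')"

definition iso_family :: "('e,'z) es_scheme \<Rightarrow> ('e \<times> 'e) set set \<Rightarrow> bool" where
  "iso_family E S \<longleftrightarrow>
     (\<forall>\<theta>\<in>S. is_cbij E \<theta>) \<and>
     (\<forall>x\<in>conf E. Id_on x \<in> S) \<and>
     (\<forall>\<theta>\<in>S. \<theta>\<inverse> \<in> S) \<and>
     (\<forall>\<theta>\<in>S. \<forall>\<phi>\<in>S. Range \<theta> = Domain \<phi> \<longrightarrow> \<theta> O \<phi> \<in> S) \<and>
     (\<forall>\<theta>\<in>S. \<forall>x\<in>conf E. x \<subseteq> Domain \<theta> \<longrightarrow> \<theta> \<inter> (x \<times> UNIV) \<in> S) \<and>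
     (\<forall>\<theta>\<in>S. \<forall>x\<in>conf E. Domain \<theta> \<subseteq> x \<longrightarrow> (\<exists>\<theta>'\<in>S. \<theta> \<subseteq> \<theta>' \<and> Domain \<theta>' = x))"

definition is_essp :: "('e,'z) essp_scheme \<Rightarrow> bool" where
  "is_essp E \<longleftrightarrow> is_es E \<and> iso_family E (Sym E) \<and>
     (\<forall>\<theta>\<in>Sym E. \<forall>(a,b)\<in>\<theta>. pol E a = pol E b)"

definition race_preserving :: "('e,'z) essp_scheme \<Rightarrow> bool" where
  "race_preserving A \<longleftrightarrow>
     (\<forall>\<theta>\<in>Sym A. \<forall>a1 a2 b1 b2.
        extends A (Domain \<theta>) a1 \<and> extends A (Domain \<theta>) a2 \<and>
        insert a1 (insert a2 (Domain \<theta>)) \<notin> conf A \<and>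
        insert (a1,b1) \<theta> \<in> Sym A \<and> insert (a2,b2) \<theta> \<in> Sym A
        \<longrightarrow> insert b1 (insert b2 (Range \<theta>)) \<notin> conf A)"

definition is_tcg :: "('e,'z) tcg_scheme \<Rightarrow> bool" where
  "is_tcg A \<longleftrightarrow> is_essp A \<and> race_preserving A \<and>
     iso_family A (SymP A) \<and> iso_family A (SymN A) \<and>
     SymP A \<subseteq> Sym A \<and> SymN A \<subseteq> Sym A \<and>
     (\<forall>\<theta>\<in>SymP A \<inter> SymN A. \<forall>(a,b)\<in>\<theta>. a = b) \<and>
     (\<forall>\<theta>\<in>SymN A. \<forall>\<theta>'\<in>Sym A. \<theta> \<subseteq> \<theta>' \<and> (\<forall>(a,b)\<in>\<theta>' - \<theta>. \<not> pol A a) \<longrightarrow> \<theta>' \<in> SymN A) \<and>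
     (\<forall>\<theta>\<in>SymP A. \<forall>\<theta>'\<in>Sym A. \<theta> \<subseteq> \<theta>' \<and> (\<forall>(a,b)\<in>\<theta>' - \<theta>. pol A a) \<longrightarrow> \<theta>' \<in> SymP A)"

definition dual :: "('e,'z) essp_scheme \<Rightarrow> 'e essp" where
  "dual E = \<lparr>Ev = Ev E, Le = Le E, Con = Con E, pol = (\<lambda>e. \<not> pol E e), Sym = Sym E\<rparr>"

definition par :: "('a,'z1) essp_scheme \<Rightarrow> ('b,'z2) essp_scheme \<Rightarrow> ('a + 'b) essp" where
  "par E F = \<lparr>Ev = Inl ` Ev E \<union> Inr ` Ev F,
     Le = (\<lambda>p q. case (p, q) of (Inl a, Inl b) \<Rightarrow> Le E a b | (Inr a, Inr b) \<Rightarrow> Le F a b | _ \<Rightarrow> False),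
     Con = (\<lambda>X. X \<subseteq> Inl ` Ev E \<union> Inr ` Ev F \<and> Con E (Inl -` X) \<and> Con F (Inr -` X)),
     pol = case_sum (pol E) (pol F),
     Sym = {map_prod Inl Inl ` \<theta>1 \<union> map_prod Inr Inr ` \<theta>2 | \<theta>1 \<theta>2. \<theta>1 \<in> Sym E \<and> \<theta>2 \<in> Sym F}\<rparr>"

definition es_map :: "('e,'z1) es_scheme \<Rightarrow> ('f,'z2) es_scheme \<Rightarrow> ('e \<Rightarrow> 'f) \<Rightarrow> bool" where
  "es_map E F f \<longleftrightarrow> (\<forall>a\<in>Ev E. f a \<in> Ev F) \<and> (\<forall>x\<in>conf E. f ` x \<in> conf F \<and> inj_on f x)"

definition essp_map :: "('e,'z1) essp_scheme \<Rightarrow> ('f,'z2) essp_scheme \<Rightarrow> ('e \<Rightarrow> 'f) \<Rightarrow> bool" where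
  "essp_map E F f \<longleftrightarrow> es_map E F f \<and> (\<forall>\<theta>\<in>Sym E. map_prod f f ` \<theta> \<in> Sym F) \<and>
     (\<forall>a\<in>Ev E. pol F (f a) = pol E a)"

definition courteous :: "('e,'z1) esp_scheme \<Rightarrow> ('f,'z2) esp_scheme \<Rightarrow> ('e \<Rightarrow> 'f) \<Rightarrow> bool" where
  "courteous S A \<sigma> \<longleftrightarrow>
     (\<forall>s1 s2. imm S s1 s2 \<and> (pol S s1 \<or> \<not> pol S s2) \<longrightarrow> imm A (\<sigma> s1) (\<sigma> s2))"

definition strong_receptive :: "('e,'z1) essp_scheme \<Rightarrow> ('f,'z2) essp_scheme \<Rightarrow> ('e \<Rightarrow> 'f) \<Rightarrow> bool" where
  "strong_receptive S A \<sigma> \<longleftrightarrow>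
     (\<forall>\<theta>\<in>Sym S. \<forall>a1 a2. \<not> pol A a1 \<and> \<not> pol A a2 \<and>
        extends A (\<sigma> ` Domain \<theta>) a1 \<and> extends A (\<sigma> ` Range \<theta>) a2 \<and>
        insert (a1, a2) (map_prod \<sigma> \<sigma> ` \<theta>) \<in> Sym A
        \<longrightarrow> (\<exists>!p. fst p \<notin> Domain \<theta> \<and> insert p \<theta> \<in> Sym S \<and> \<sigma> (fst p) = a1 \<and> \<sigma> (snd p) = a2))"

definition thin :: "('e,'z) essp_scheme \<Rightarrow> bool" where
  "thin S \<longleftrightarrow> (\<forall>x s1 s2. extends S x s1 \<and> extends S x s2 \<and> pol S s1 \<and>
     insert (s1, s2) (Id_on x) \<in> Sym S \<longrightarrow> s1 = s2)"

definition sim_strategy :: "('e,'z1) essp_scheme \<Rightarrow> ('f,'z2) essp_scheme \<Rightarrow> ('e \<Rightarrow> 'f) \<Rightarrow> bool" where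
  "sim_strategy S A \<sigma> \<longleftrightarrow> is_essp S \<and> is_essp A \<and> essp_map S A \<sigma> \<and>
     courteous S A \<sigma> \<and> strong_receptive S A \<sigma> \<and> thin S"

definition sec_rel :: "('x,'z1) es_scheme \<Rightarrow> ('y,'z2) es_scheme \<Rightarrow> ('x \<times> 'y) set \<Rightarrow> (('x \<times> 'y) \<times> ('x \<times> 'y)) set" where
  "sec_rel X Y \<theta> = {(u, v). u \<in> \<theta> \<and> v \<in> \<theta> \<and> (lt X (fst u) (fst v) \<or> lt Y (snd u) (snd v))}"

(* secured bijections = configurations of the pullback of f and g *)
definition secured_bij :: "('x,'z1) es_scheme \<Rightarrow> ('y,'z2) es_scheme \<Rightarrow> ('x \<Rightarrow> 'w) \<Rightarrow> ('y \<Rightarrow> 'w) \<Rightarrow> ('x \<times> 'y) set \<Rightarrow> bool" where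
  "secured_bij X Y f g \<theta> \<longleftrightarrow>
     fst ` \<theta> \<in> conf X \<and> snd ` \<theta> \<in> conf Y \<and>
     (\<forall>p q q'. (p,q) \<in> \<theta> \<and> (p,q') \<in> \<theta> \<longrightarrow> q = q') \<and>
     (\<forall>p p' q. (p,q) \<in> \<theta> \<and> (p',q) \<in> \<theta> \<longrightarrow> p = p') \<and>
     (\<forall>(p,q)\<in>\<theta>. f p = g q) \<and>
     acyclic (sec_rel X Y \<theta>)"

definition is_top :: "('x,'z1) es_scheme \<Rightarrow> ('y,'z2) es_scheme \<Rightarrow> ('x \<times> 'y) set \<Rightarrow> ('x \<times> 'y) \<Rightarrow> bool" where
  "is_top X Y \<theta> u \<longleftrightarrow> u \<in> \<theta> \<and> \<theta> = {v. (v, u) \<in> (sec_rel X Y \<theta>)\<^sup>*}"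

definition top :: "('x,'z1) es_scheme \<Rightarrow> ('y,'z2) es_scheme \<Rightarrow> ('x \<times> 'y) set \<Rightarrow> ('x \<times> 'y)" where
  "top X Y \<theta> = (THE u. is_top X Y \<theta> u)"

(* the pullback event structure: events are prime secured bijections *)
definition pullback :: "('x,'z1) es_scheme \<Rightarrow> ('y,'z2) es_scheme \<Rightarrow> ('x \<Rightarrow> 'w) \<Rightarrow> ('y \<Rightarrow> 'w) \<Rightarrow> ('x \<times> 'y) set es" where
  "pullback X Y f g =
     (let V = {\<theta>. secured_bij X Y f g \<theta> \<and> (\<exists>u. is_top X Y \<theta> u)} in
      \<lparr>Ev = V, Le = (\<lambda>\<theta> \<theta>'. \<theta> \<in> V \<and> \<theta>' \<in> V \<and> \<theta> \<subseteq> \<theta>'),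
       Con = (\<lambda>Xs. finite Xs \<and> Xs \<subseteq> V \<and> secured_bij X Y f g (\<Union>Xs))\<rparr>)"

(* \<sigma> \<parallel> C, landing in A \<parallel> (B \<parallel> C) via associativity *)
definition lift_l :: "('s \<Rightarrow> 'a + 'b) \<Rightarrow> 's + 'c \<Rightarrow> 'a + ('b + 'c)" where
  "lift_l \<sigma> = case_sum (\<lambda>s. case \<sigma> s of Inl a \<Rightarrow> Inl a | Inr b \<Rightarrow> Inr (Inl b)) (\<lambda>c. Inr (Inr c))"

definition lift_r :: "('t \<Rightarrow> 'b + 'c) \<Rightarrow> 'a + 't \<Rightarrow> 'a + ('b + 'c)" where
  "lift_r \<tau> = case_sum Inl (\<lambda>t. Inr (\<tau> t))"

(* T \<odot> S : the pullback of \<sigma>\<parallel>C and A\<parallel>\<tau>, restricted to events not mapping to B;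
   polarity inherited from S \<parallel> C *)
definition strat_comp :: "('s,'z1) essp_scheme \<Rightarrow> ('t,'z2) essp_scheme \<Rightarrow> ('a,'z3) essp_scheme \<Rightarrow> ('c,'z4) essp_scheme
                    \<Rightarrow> ('s \<Rightarrow> 'a + 'b) \<Rightarrow> ('t \<Rightarrow> 'b + 'c) \<Rightarrow> (('s + 'c) \<times> ('a + 't)) set esp" where
  "strat_comp S T A C \<sigma> \<tau> =
     (let X = par S C; Y = par A T; P = pullback X Y (lift_l \<sigma>) (lift_r \<tau>);
          V = {\<theta> \<in> Ev P. \<forall>b. lift_l \<sigma> (fst (top X Y \<theta>)) \<noteq> Inr (Inl b)} in
      \<lparr>Ev = V, Le = (\<lambda>\<theta> \<theta>'. \<theta> \<in> V \<and> \<theta>' \<in> V \<and> Le P \<theta> \<theta>'),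
       Con = (\<lambda>Xs. Xs \<subseteq> V \<and> Con P Xs),
       pol = (\<lambda>\<theta>. pol X (fst (top X Y \<theta>)))\<rparr>)"

end

theory Submission
  imports Defs
begin

text \<open>Every pair of an interaction of \<open>\<sigma>\<close> and \<open>\<tau>\<close> belongs to a thread, named by a minimal
  event of \<open>T\<close>, i.e.\ an initial Opponent move in \<open>C\<close>. Courtesy lets one descend from any
  synchronisation in \<open>B\<close> to the roots of both strategies inside the interaction, so the thread
  is constant along causality; and since distinct threads of a single-threaded strategy never
  play the same move, a move determines its thread. Hence the minimal events of \<open>T \<odot> S\<close> are the
  initial moves of \<open>C\<close>, which are negative, and every event lies above exactly the one of its
  thread. Two extensions of a configuration with disjoint causal histories lie in distinct
  threads; their union then splits along the two threads, its projections to \<open>S\<close> and \<open>T\<close> are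
  unions of configurations without common events, hence configurations, and a causal cycle would
  stay within one thread, hence within one of the two secured bijections.\<close>

lemma
  assumes "is_es E"
  shows es_Le_Ev: "Le E a b \<Longrightarrow> a \<in> Ev E \<and> b \<in> Ev E"
    and es_refl: "a \<in> Ev E \<Longrightarrow> Le E a a"
    and es_antisym: "Le E a b \<Longrightarrow> Le E b a \<Longrightarrow> a = b"
    and es_trans: "Le E a b \<Longrightarrow> Le E b c \<Longrightarrow> Le E a c"
    and es_finite_down: "a \<in> Ev E \<Longrightarrow> finite (down E a)"
    and es_Con_empty: "Con E {}"
    and es_Con_singleton: "a \<in> Ev E \<Longrightarrow> Con E {a}"
    and es_Con_subset: "Con E Y \<Longrightarrow> X \<subseteq> Y \<Longrightarrow> Con E X"
    and es_Con_insert_below: "Con E X \<Longrightarrow> b \<in> X \<Longrightarrow> Le E a b \<Longrightarrow> Con E (insert a X)"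
  using assms unfolding is_es_def by meson+

lemma tcg_is_es: "is_tcg A \<Longrightarrow> is_es A"
  unfolding is_tcg_def is_essp_def by blast

lemma confI:
  "finite x \<Longrightarrow> x \<subseteq> Ev E \<Longrightarrow> (\<And>a b. b \<in> x \<Longrightarrow> Le E a b \<Longrightarrow> a \<in> x) \<Longrightarrow> Con E x \<Longrightarrow> x \<in> conf E"
  unfolding conf_def by blast

lemma
  assumes "x \<in> conf E"
  shows conf_finite: "finite x"
    and conf_subset_Ev: "x \<subseteq> Ev E"
    and conf_Con: "Con E x"
    and conf_down_closed: "b \<in> x \<Longrightarrow> Le E a b \<Longrightarrow> a \<in> x"
  using assms unfolding conf_def by auto

lemma conf_Un:
  assumes u: "u \<in> conf E" and v: "v \<in> conf E" and "Con E (u \<union> v)"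
  shows "u \<union> v \<in> conf E"
proof (rule confI)
  show "finite (u \<union> v)" using conf_finite[OF u] conf_finite[OF v] by simp
  show "u \<union> v \<subseteq> Ev E" using conf_subset_Ev[OF u] conf_subset_Ev[OF v] by simp
  show "a \<in> u \<union> v" if "b \<in> u \<union> v" "Le E a b" for a b
    using that conf_down_closed[OF u] conf_down_closed[OF v] by blast
qed fact

lemma conf_subset:
  assumes E: "is_es E" and y: "y \<in> conf E" and sub: "y' \<subseteq> y"
    and closed: "\<And>a b. b \<in> y' \<Longrightarrow> Le E a b \<Longrightarrow> a \<in> y'"
  shows "y' \<in> conf E"
  using conf_finite[OF y] conf_subset_Ev[OF y] es_Con_subset[OF E conf_Con[OF y] sub] sub closed
  by (intro confI) (auto intro: finite_subset)

lemma down_in_conf: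
  assumes E: "is_es E" and a: "a \<in> Ev E"
  shows "down E a \<in> conf E"
proof -
  have "Con E (insert a F)" if "finite F" "F \<subseteq> down E a" for F
    using that
  proof (induction F rule: finite_induct)
    case empty
    then show ?case using es_Con_singleton[OF E a] by simp
  next
    case (insert e F)
    then have "Con E (insert e (insert a F))"
      using es_Con_insert_below[OF E] by (auto simp: down_def)
    then show ?case by (simp add: insert_commute)
  qed
  from this[OF es_finite_down[OF E a] order_refl] have "Con E (down E a)"
    using es_refl[OF E a] by (simp add: down_def insert_absorb)
  moreover have "down E a \<subseteq> Ev E" using es_Le_Ev[OF E] by (auto simp: down_def)
  moreover have "c \<in> down E a" if "b \<in> down E a" "Le E c b" for b c
    using es_trans[OF E that(2)] that(1) by (simp add: down_def)
  ultimately show ?thesis using es_finite_down[OF E a] by (intro confI)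
qed

lemma minimal_singleton_conf:
  assumes E: "is_es E" and m: "minimal E m"
  shows "{m} \<in> conf E"
  using m es_Con_singleton[OF E] unfolding minimal_def conf_def by auto

lemma down_card_mono:
  assumes E: "is_es E" and le: "Le E a b"
  shows "card (down E a) \<le> card (down E b)"
proof -
  have "down E a \<subseteq> down E b" using es_trans[OF E _ le] by (auto simp: down_def)
  then show ?thesis using es_finite_down[OF E] es_Le_Ev[OF E le] by (simp add: card_mono)
qed

lemma down_card_strict_mono:
  assumes E: "is_es E" and lt: "lt E a b"
  shows "card (down E a) < card (down E b)"
proof -
  have le: "Le E a b" and ne: "a \<noteq> b" using lt by (auto simp: lt_def)
  have bE: "b \<in> Ev E" using es_Le_Ev[OF E le] by blast
  have "down E a \<subset> down E b"
    using es_trans[OF E _ le] es_refl[OF E bE] es_antisym[OF E le] ne by (auto simp: down_def)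
  then show ?thesis using es_finite_down[OF E bE] by (simp add: psubset_card_mono)
qed

lemma finite_has_greatest_measure:
  fixes m :: "'a \<Rightarrow> nat"
  assumes "finite Z" "Z \<noteq> {}"
  obtains e where "e \<in> Z" "\<And>e'. e' \<in> Z \<Longrightarrow> m e' \<le> m e"
proof -
  have "Max (m ` Z) \<in> m ` Z" using assms by simp
  then obtain e where "e \<in> Z" "m e = Max (m ` Z)" by auto
  then show ?thesis using assms by (intro that) auto
qed

lemma exists_imm_below:
  assumes E: "is_es E" and e: "e \<in> Ev E" and nm: "\<not> minimal E e"
  obtains e' where "imm E e' e"
proof -
  define L where "L = {e'. lt E e' e}"
  have "finite L"
    using es_finite_down[OF E e] by (rule finite_subset[rotated]) (auto simp: L_def down_def lt_def)
  moreover have "L \<noteq> {}" using nm e unfolding L_def minimal_def lt_def by auto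
  ultimately obtain e' where e': "e' \<in> L"
    and greatest: "\<And>c. c \<in> L \<Longrightarrow> card (down E c) \<le> card (down E e')"
    using finite_has_greatest_measure[of L "\<lambda>e. card (down E e)"] by blast
  have "imm E e' e"
    unfolding imm_def
    using e' greatest down_card_strict_mono[OF E] by (auto simp: L_def) (meson leD)
  then show ?thesis by (rule that)
qed

lemma conf_remove_maximal:
  assumes E: "is_es E" and z: "z \<in> conf E" "z \<noteq> {}"
  obtains e where "e \<in> z" "z - {e} \<in> conf E"
proof -
  obtain e where e: "e \<in> z" and greatest: "\<And>e'. e' \<in> z \<Longrightarrow> card (down E e') \<le> card (down E e)"
    using finite_has_greatest_measure[OF conf_finite[OF z(1)] z(2), of "\<lambda>e. card (down E e)"]
      by blast
  have "z - {e} \<in> conf E"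
  proof (rule conf_subset[OF E z(1)])
    fix a b assume b: "b \<in> z - {e}" and le: "Le E a b"
    have "a \<noteq> e"
      using down_card_strict_mono[OF E, of e b] greatest[of b] b le by (auto simp: lt_def)
    then show "a \<in> z - {e}" using conf_down_closed[OF z(1)] b le by blast
  qed blast
  with e show ?thesis by (rule that)
qed

definition root :: "('e,'z) es_scheme \<Rightarrow> 'e \<Rightarrow> 'e" where
  "root E a = (THE m. m \<in> down E a \<and> minimal E m)"

lemma
  assumes "single_threaded E" "a \<in> Ev E"
  shows root_le: "Le E (root E a) a"
    and root_minimal: "minimal E (root E a)"
proof -
  have "\<exists>!m. m \<in> down E a \<and> minimal E m" using assms unfolding single_threaded_def by blast
  from theI'[OF this] show "Le E (root E a) a" "minimal E (root E a)"
    unfolding root_def down_def by auto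
qed

lemma root_eqI:
  assumes "single_threaded E" "a \<in> Ev E" "minimal E m" "Le E m a"
  shows "root E a = m"
proof -
  have "\<exists>!m. m \<in> down E a \<and> minimal E m" using assms unfolding single_threaded_def by blast
  then show ?thesis unfolding root_def using assms(3,4)
    by (intro the1_equality) (auto simp: down_def)
qed

lemma root_eq_if_Le:
  assumes E: "is_es E" and st: "single_threaded E" and le: "Le E a b"
  shows "root E a = root E b"
proof -
  have ab: "a \<in> Ev E" "b \<in> Ev E" using es_Le_Ev[OF E le] by auto
  show ?thesis
    using root_eqI[OF st ab(2) root_minimal[OF st ab(1)] es_trans[OF E root_le[OF st ab(1)] le]]
    by simp
qed

lemma root_of_minimal:
  assumes E: "is_es E" and st: "single_threaded E" and m: "minimal E m"
  shows "root E m = m"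
  using root_eqI[OF st _ m] m es_refl[OF E] unfolding minimal_def by auto

lemma root_eq_if_down_meet:
  assumes E: "is_es E" and st: "single_threaded E" and meet: "down E a \<inter> down E b \<noteq> {}"
  shows "root E a = root E b"
proof -
  obtain c where "Le E c a" "Le E c b" using meet by (auto simp: down_def)
  then show ?thesis using root_eq_if_Le[OF E st] by metis
qed

lemma single_threaded_conflict:
  assumes "single_threaded E" "extends E x a1" "extends E x a2"
    and "insert a1 (insert a2 x) \<notin> conf E"
  shows "down E a1 \<inter> down E a2 \<noteq> {}"
  using assms unfolding single_threaded_def by blast

lemma single_threaded_Con_Un_step:
  assumes E: "is_es E" and st: "single_threaded E"
    and z1: "z1 \<in> conf E" "e1 \<in> z1" "z1 - {e1} \<in> conf E" "e1 \<notin> z2"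
    and z2: "z2 \<in> conf E" "e2 \<in> z2" "z2 - {e2} \<in> conf E" "e2 \<notin> z1"
    and c1: "Con E ((z1 - {e1}) \<union> z2)" and c2: "Con E (z1 \<union> (z2 - {e2}))"
    and disj: "down E e1 \<inter> down E e2 = {}"
  shows "Con E (z1 \<union> z2)"
proof -
  define z where "z = (z1 - {e1}) \<union> (z2 - {e2})"
  have "z \<in> conf E"
    unfolding z_def by (rule conf_Un[OF z1(3) z2(3) es_Con_subset[OF E c1]]) blast
  moreover have "insert e1 z = z1 \<union> (z2 - {e2})" "insert e2 z = (z1 - {e1}) \<union> z2"
    using z1(2) z2(2) unfolding z_def by auto
  moreover have "e1 \<notin> z" "e2 \<notin> z" using z1(4) z2(4) unfolding z_def by auto
  ultimately have "extends E z e1" "extends E z e2"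
    using conf_Un[OF z1(1) z2(3) c2] conf_Un[OF z1(3) z2(1) c1] unfolding extends_def by auto
  then have "insert e1 (insert e2 z) \<in> conf E"
    using single_threaded_conflict[OF st] disj by blast
  moreover have "insert e1 (insert e2 z) = z1 \<union> z2" using z1(2) z2(2) unfolding z_def by auto
  ultimately show ?thesis using conf_Con by metis
qed

text \<open>A minimal incompatible pair of sub-configurations would, after removing a maximal event
  from each side, give two compatible one-event extensions of a common configuration with no
  common cause, contradicting single-threadedness.\<close>

lemma single_threaded_conf_Un:
  assumes E: "is_es E" and st: "single_threaded E"
    and y1: "y1 \<in> conf E" and y2: "y2 \<in> conf E" and disj: "y1 \<inter> y2 = {}"
  shows "y1 \<union> y2 \<in> conf E"
proof -
  have "Con E (z1 \<union> z2)" if "z1 \<in> conf E" "z2 \<in> conf E" "z1 \<subseteq> y1" "z2 \<subseteq> y2" for z1 z2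
    using that
  proof (induction "card z1 + card z2" arbitrary: z1 z2 rule: less_induct)
    case less
    note z1 = less.prems(1,3) and z2 = less.prems(2,4)
    show ?case
    proof (cases "z1 = {} \<or> z2 = {}")
      case True
      then show ?thesis using conf_Con[OF z1(1)] conf_Con[OF z2(1)] by auto
    next
      case False
      obtain e1 where e1: "e1 \<in> z1" "z1 - {e1} \<in> conf E"
        using conf_remove_maximal[OF E z1(1)] False by blast
      obtain e2 where e2: "e2 \<in> z2" "z2 - {e2} \<in> conf E"
        using conf_remove_maximal[OF E z2(1)] False by blast
      have "card (z1 - {e1}) + card z2 < card z1 + card z2"
        using card_Diff1_less[OF conf_finite[OF z1(1)] e1(1)] by simp
      then have c1: "Con E ((z1 - {e1}) \<union> z2)"
        by (rule less.hyps[OF _ e1(2) z2(1)]) (use z1(2) z2(2) in auto)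
      have "card z1 + card (z2 - {e2}) < card z1 + card z2"
        using card_Diff1_less[OF conf_finite[OF z2(1)] e2(1)] by simp
      then have c2: "Con E (z1 \<union> (z2 - {e2}))"
        by (rule less.hyps[OF _ z1(1) e2(2)]) (use z1(2) z2(2) in auto)
      have "down E e1 \<inter> down E e2 = {}"
      proof (rule ccontr)
        assume "down E e1 \<inter> down E e2 \<noteq> {}"
        then obtain c where "Le E c e1" "Le E c e2" by (auto simp: down_def)
        then have "c \<in> y1" "c \<in> y2"
          using conf_down_closed[OF y1] conf_down_closed[OF y2] e1(1) e2(1) z1(2) z2(2) by blast+
        then show False using disj by blast
      qed
      moreover have "e1 \<notin> z2" "e2 \<notin> z1" using e1(1) e2(1) z1(2) z2(2) disj by auto
      ultimately show ?thesis
        using single_threaded_Con_Un_step[OF E st z1(1) e1 _ z2(1) e2 _ c1 c2] by blast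
    qed
  qed
  then show ?thesis using conf_Un[OF y1 y2] y1 y2 by blast
qed

lemma root_eq_if_image_eq:
  assumes E: "is_es E" and st: "single_threaded E" and f: "es_map E F f"
    and a: "a \<in> Ev E" and b: "b \<in> Ev E" and eq: "f a = f b"
  shows "root E a = root E b"
proof (rule ccontr)
  assume ne: "root E a \<noteq> root E b"
  then have "down E a \<inter> down E b = {}" using root_eq_if_down_meet[OF E st] by blast
  then have "down E a \<union> down E b \<in> conf E"
    using single_threaded_conf_Un[OF E st down_in_conf[OF E a] down_in_conf[OF E b]] by blast
  then have "inj_on f (down E a \<union> down E b)" using f unfolding es_map_def by blast
  moreover have "a \<in> down E a" "b \<in> down E b" using es_refl[OF E] a b by (auto simp: down_def)
  ultimately have "a = b" using eq by (auto simp: inj_on_def)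
  then show False using ne by simp
qed

lemma es_map_lift_down:
  assumes E: "is_es E" and f: "es_map E F f" and a: "a \<in> Ev E" and le: "Le F e (f a)"
  obtains a' where "Le E a' a" "f a' = e"
proof -
  have "f ` down E a \<in> conf F" using f down_in_conf[OF E a] unfolding es_map_def by blast
  moreover have "f a \<in> f ` down E a" using es_refl[OF E a] by (auto simp: down_def)
  ultimately have "e \<in> f ` down E a" using le by (rule conf_down_closed)
  then obtain a' where "a' \<in> down E a" "f a' = e" by blast
  then show ?thesis using that by (simp add: down_def)
qed

lemma single_threaded_conf_Un_label:
  assumes E: "is_es E" and st: "single_threaded E"
    and y1: "y1 \<in> conf E" and y2: "y2 \<in> conf E"
    and causal: "\<And>a b. Le E a b \<Longrightarrow> h a = h b"
    and causal': "\<And>a b. Le E a b \<Longrightarrow> h' a = h' b"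
    and agree: "\<And>e. e \<in> y1 \<Longrightarrow> e \<in> y2 \<Longrightarrow> h e = h' e"
    and only1: "\<And>e. e \<in> y1 \<Longrightarrow> e \<notin> y2 \<Longrightarrow> h e \<noteq> k"
    and only2: "\<And>e. e \<in> y2 \<Longrightarrow> e \<notin> y1 \<Longrightarrow> h' e = k"
  shows "y1 \<union> y2 \<in> conf E"
proof -
  define z1 where "z1 = {e \<in> y1. h e \<noteq> k}"
  define z2 where "z2 = {e \<in> y2. h' e = k}"
  have "z1 \<in> conf E"
    unfolding z1_def using conf_down_closed[OF y1] causal by (intro conf_subset[OF E y1]) auto
  moreover have "z2 \<in> conf E"
    unfolding z2_def using conf_down_closed[OF y2] causal' by (intro conf_subset[OF E y2]) auto
  moreover have "z1 \<inter> z2 = {}" unfolding z1_def z2_def using agree by auto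
  moreover have "e \<in> z1 \<union> z2" if "e \<in> y1 \<union> y2" for e
    using that agree[of e] only1[of e] only2[of e] unfolding z1_def z2_def
    by (cases "e \<in> y1"; cases "e \<in> y2") auto
  then have "y1 \<union> y2 = z1 \<union> z2" unfolding z1_def z2_def by auto
  ultimately show ?thesis using single_threaded_conf_Un[OF E st] by simp
qed

lemma par_simps [simp]:
  "Ev (par E F) = Inl ` Ev E \<union> Inr ` Ev F"
  "Le (par E F) (Inl a) (Inl b) = Le E a b"
  "Le (par E F) (Inr c) (Inr d) = Le F c d"
  "Le (par E F) (Inl a) (Inr d) = False"
  "Le (par E F) (Inr c) (Inl b) = False"
  "Con (par E F) x = (x \<subseteq> Inl ` Ev E \<union> Inr ` Ev F \<and> Con E (Inl -` x) \<and> Con F (Inr -` x))"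
  "pol (par E F) (Inl a) = pol E a"
  "pol (par E F) (Inr c) = pol F c"
  by (simp_all add: par_def)

lemma Le_parE:
  assumes "Le (par E F) p q"
  obtains (Inl) a b where "p = Inl a" "q = Inl b" "Le E a b"
    | (Inr) c d where "p = Inr c" "q = Inr d" "Le F c d"
  using assms by (cases p; cases q) auto

lemma dual_simps [simp]:
  "Ev (dual E) = Ev E" "Le (dual E) = Le E" "Con (dual E) = Con E" "pol (dual E) a = (\<not> pol E a)"
  by (simp_all add: dual_def)

lemma
  assumes x: "x \<in> conf (par E F)"
  shows par_conf_Inl: "Inl -` x \<in> conf E"
    and par_conf_Inr: "Inr -` x \<in> conf F"
  using conf_finite[OF x] conf_subset_Ev[OF x] conf_Con[OF x] conf_down_closed[OF x]
  by (auto intro!: confI finite_vimageI)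

lemma
  assumes "sim_strategy S A \<sigma>"
  shows sim_strategy_es: "is_es S"
    and sim_strategy_es_map: "es_map S A \<sigma>"
    and sim_strategy_pol: "s \<in> Ev S \<Longrightarrow> pol A (\<sigma> s) = pol S s"
    and sim_strategy_courteous: "courteous S A \<sigma>"
  using assms unfolding sim_strategy_def essp_map_def is_essp_def by blast+

lemma es_map_minimal:
  assumes E: "is_es E" and f: "es_map E F f" and m: "minimal E m"
  shows "minimal F (f m)"
proof -
  have "f m \<in> Ev F" using f m unfolding es_map_def minimal_def by blast
  moreover have "e = f m" if "Le F e (f m)" for e
    using es_map_lift_down[OF E f _ that] m unfolding minimal_def by metis
  ultimately show ?thesis unfolding minimal_def by blast
qed

lemma par_conf_Inr_image:
  fixes D :: "('d,'z1) essp_scheme" and E :: "('e,'z2) essp_scheme"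
  assumes D: "is_es D" and x: "x \<in> conf E"
  shows "Inr ` x \<in> conf (par D E)"
proof (rule confI)
  show "finite (Inr ` x)" using conf_finite[OF x] by simp
  show "Inr ` x \<subseteq> Ev (par D E)" using conf_subset_Ev[OF x] by auto
  have "Inl -` (Inr ` x :: ('d + 'e) set) = {}" by auto
  moreover have "Inr -` (Inr ` x :: ('d + 'e) set) = x" by (simp add: inj_vimage_image_eq)
  ultimately show "Con (par D E) (Inr ` x)"
    using conf_subset_Ev[OF x] conf_Con[OF x] es_Con_empty[OF D] by auto
  show "a \<in> Inr ` x" if "b \<in> Inr ` x" "Le (par D E) a b" for a b
    using that(2)
  proof (cases rule: Le_parE)
    case (Inr c d)
    then show ?thesis using that(1) conf_down_closed[OF x] by auto
  qed (use that(1) in auto)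
qed

text \<open>Minimal moves of a negative strategy are Opponent moves, which in
  \<open>A\<^sup>\<perp> \<parallel> B\<close> with \<open>A\<close> negative can only be played in \<open>B\<close>.\<close>

lemma negative_strategy_minimal_Inr:
  assumes \<sigma>: "sim_strategy S (par (dual A) B) \<sigma>"
    and nA: "negative A" and nS: "negative S" and m: "minimal S m"
  obtains b where "\<sigma> m = Inr b"
proof (cases "\<sigma> m")
  case (Inl a)
  have mE: "m \<in> Ev S" using m unfolding minimal_def by blast
  have img: "\<sigma> ` {m} \<in> conf (par (dual A) B)"
    using sim_strategy_es_map[OF \<sigma>] minimal_singleton_conf[OF sim_strategy_es[OF \<sigma>] m]
    unfolding es_map_def by blast
  have "a \<in> Ev A" using Inl conf_subset_Ev[OF img] by auto
  moreover have "a' = a" if "Le A a' a" for a'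
    using conf_down_closed[OF img, of "\<sigma> m" "Inl a'"] Inl that by simp
  ultimately have "minimal A a" unfolding minimal_def by blast
  then have "pol (par (dual A) B) (\<sigma> m)" using nA Inl unfolding negative_def by simp
  moreover have "\<not> pol S m" using nS m unfolding negative_def by blast
  ultimately show ?thesis using sim_strategy_pol[OF \<sigma> mE] by simp
qed

locale st_composition =
  fixes S :: "'s essp" and T :: "'t essp"
    and A :: "('a, 'x) essp_scheme" and B :: "('b, 'y) essp_scheme" and C :: "('c, 'z) essp_scheme"
    and \<sigma> :: "'s \<Rightarrow> 'a + 'b" and \<tau> :: "'t \<Rightarrow> 'b + 'c"
  assumes es_A: "is_es A" and es_C: "is_es C"
    and neg_A: "negative A" and neg_B: "negative B"
    and strat_\<sigma>: "sim_strategy S (par (dual A) B) \<sigma>"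
    and strat_\<tau>: "sim_strategy T (par (dual B) C) \<tau>"
    and neg_S: "negative S" and neg_T: "negative T"
    and st_S: "single_threaded S" and st_T: "single_threaded T"
begin

abbreviation "X \<equiv> par S C"
abbreviation "Y \<equiv> par A T"
abbreviation "f \<equiv> lift_l \<sigma>"
abbreviation "g \<equiv> lift_r \<tau>"

lemma es_S: "is_es S"
  by (rule sim_strategy_es[OF strat_\<sigma>])

lemma es_T: "is_es T"
  by (rule sim_strategy_es[OF strat_\<tau>])

lemma map_\<sigma>: "es_map S (par (dual A) B) \<sigma>"
  by (rule sim_strategy_es_map[OF strat_\<sigma>])

lemma map_\<tau>: "es_map T (par (dual B) C) \<tau>"
  by (rule sim_strategy_es_map[OF strat_\<tau>])

lemma map_\<sigma>_conf: "y \<in> conf S \<Longrightarrow> \<sigma> ` y \<in> conf (par (dual A) B) \<and> inj_on \<sigma> y"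
  using map_\<sigma> unfolding es_map_def by blast

lemma map_\<tau>_conf: "z \<in> conf T \<Longrightarrow> \<tau> ` z \<in> conf (par (dual B) C) \<and> inj_on \<tau> z"
  using map_\<tau> unfolding es_map_def by blast

lemma pol_\<sigma>: "s \<in> Ev S \<Longrightarrow> pol (par (dual A) B) (\<sigma> s) = pol S s"
  by (rule sim_strategy_pol[OF strat_\<sigma>])

lemma pol_\<tau>: "t \<in> Ev T \<Longrightarrow> pol (par (dual B) C) (\<tau> t) = pol T t"
  by (rule sim_strategy_pol[OF strat_\<tau>])

lemma minimal_S_Inr: "minimal S m \<Longrightarrow> \<exists>b. \<sigma> m = Inr b"
  using negative_strategy_minimal_Inr[OF strat_\<sigma> neg_A neg_S] by metis

lemma minimal_T_Inr: "minimal T m \<Longrightarrow> \<exists>c. \<tau> m = Inr c"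
  using negative_strategy_minimal_Inr[OF strat_\<tau> neg_B neg_T] by metis

lemma sync_Inr_C: "f (Inr c) = g q \<Longrightarrow> \<exists>t. q = Inr t \<and> \<tau> t = Inr c"
  by (cases q) (auto simp: lift_l_def lift_r_def)
lemma sync_Inl_A: "f p = g (Inl a) \<Longrightarrow> \<exists>s. p = Inl s \<and> \<sigma> s = Inl a"
  by (cases p) (auto simp: lift_l_def lift_r_def split: sum.splits)
lemma sync_S_B: "f (Inl s) = g q \<Longrightarrow> \<sigma> s = Inr b \<Longrightarrow> \<exists>t. q = Inr t \<and> \<tau> t = Inl b"
  by (cases q) (auto simp: lift_l_def lift_r_def)
lemma sync_S_A: "f (Inl s) = g q \<Longrightarrow> \<sigma> s = Inl a \<Longrightarrow> q = Inl a"
  by (cases q) (auto simp: lift_l_def lift_r_def)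
lemma sync_T_B: "f p = g (Inr t) \<Longrightarrow> \<tau> t = Inl b \<Longrightarrow> \<exists>s. p = Inl s \<and> \<sigma> s = Inr b"
  by (cases p) (auto simp: lift_l_def lift_r_def split: sum.splits)
lemma sync_T_C: "f p = g (Inr t) \<Longrightarrow> \<tau> t = Inr c \<Longrightarrow> p = Inr c"
  by (cases p) (auto simp: lift_l_def lift_r_def split: sum.splits)
lemma sync_S_T: "f (Inl s) = g (Inr t) \<Longrightarrow> \<exists>b. \<sigma> s = Inr b \<and> \<tau> t = Inl b"
  by (auto simp: lift_l_def lift_r_def split: sum.splits)

definition matching :: "(('s + 'c) \<times> ('a + 't)) set \<Rightarrow> bool" where
  "matching W \<longleftrightarrow> fst ` W \<in> conf X \<and> snd ` W \<in> conf Y \<and>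
     (\<forall>p q q'. (p,q) \<in> W \<and> (p,q') \<in> W \<longrightarrow> q = q') \<and>
     (\<forall>p p' q. (p,q) \<in> W \<and> (p',q) \<in> W \<longrightarrow> p = p') \<and>
     (\<forall>(p,q)\<in>W. f p = g q)"

lemma secured_bij_iff: "secured_bij X Y f g W \<longleftrightarrow> matching W \<and> acyclic (sec_rel X Y W)"
  unfolding secured_bij_def matching_def by blast

lemma
  assumes "matching W"
  shows matching_fst_conf: "fst ` W \<in> conf X"
    and matching_snd_conf: "snd ` W \<in> conf Y"
    and matching_right_unique: "(p,q) \<in> W \<Longrightarrow> (p,q') \<in> W \<Longrightarrow> q = q'"
    and matching_left_unique: "(p,q) \<in> W \<Longrightarrow> (p',q) \<in> W \<Longrightarrow> p = p'"
    and matching_sync: "(p,q) \<in> W \<Longrightarrow> f p = g q"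
  using assms unfolding matching_def by blast+

definition S_part :: "(('s + 'c) \<times> ('a + 't)) set \<Rightarrow> 's set" where
  "S_part W = {s. \<exists>q. (Inl s, q) \<in> W}"

definition T_part :: "(('s + 'c) \<times> ('a + 't)) set \<Rightarrow> 't set" where
  "T_part W = {t. \<exists>p. (p, Inr t) \<in> W}"

lemma S_part_conf: "matching W \<Longrightarrow> S_part W \<in> conf S"
proof -
  have "S_part W = Inl -` fst ` W" unfolding S_part_def by force
  then show "matching W \<Longrightarrow> S_part W \<in> conf S" using par_conf_Inl matching_fst_conf by metis
qed

lemma T_part_conf: "matching W \<Longrightarrow> T_part W \<in> conf T"
proof -
  have "T_part W = Inr -` snd ` W" unfolding T_part_def by force
  then show "matching W \<Longrightarrow> T_part W \<in> conf T" using par_conf_Inr matching_snd_conf by metis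
qed

lemma S_part_down_closed: "matching W \<Longrightarrow> s \<in> S_part W \<Longrightarrow> Le S s' s \<Longrightarrow> s' \<in> S_part W"
  by (rule conf_down_closed[OF S_part_conf])
lemma T_part_down_closed: "matching W \<Longrightarrow> t \<in> T_part W \<Longrightarrow> Le T t' t \<Longrightarrow> t' \<in> T_part W"
  by (rule conf_down_closed[OF T_part_conf])
lemma S_part_Ev: "matching W \<Longrightarrow> s \<in> S_part W \<Longrightarrow> s \<in> Ev S"
  using conf_subset_Ev[OF S_part_conf] by blast
lemma T_part_Ev: "matching W \<Longrightarrow> t \<in> T_part W \<Longrightarrow> t \<in> Ev T"
  using conf_subset_Ev[OF T_part_conf] by blast

lemma matching_inj_\<sigma>:
  assumes W: "matching W" and "(Inl s, q) \<in> W" "(Inl s', q') \<in> W" "\<sigma> s = \<sigma> s'"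
  shows "s = s'"
proof -
  have "s \<in> S_part W" "s' \<in> S_part W" using assms unfolding S_part_def by blast+
  then show ?thesis using map_\<sigma>_conf[OF S_part_conf[OF W]] assms(4) by (simp add: inj_on_def)
qed

lemma matching_inj_\<tau>:
  assumes W: "matching W" and "(p, Inr t) \<in> W" "(p', Inr t') \<in> W" "\<tau> t = \<tau> t'"
  shows "t = t'"
proof -
  have "t \<in> T_part W" "t' \<in> T_part W" using assms unfolding T_part_def by blast+
  then show ?thesis using map_\<tau>_conf[OF T_part_conf[OF W]] assms(4) by (simp add: inj_on_def)
qed

definition partner :: "(('s + 'c) \<times> ('a + 't)) set \<Rightarrow> 's \<Rightarrow> 't" where
  "partner W s = (THE t. (Inl s, Inr t) \<in> W)"

lemma partner_eq:
  assumes W: "matching W" and pair: "(Inl s, Inr t) \<in> W"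
  shows "partner W s = t"
  unfolding partner_def
proof (rule the_equality)
  show "(Inl s, Inr t) \<in> W" by (fact pair)
  show "t' = t" if "(Inl s, Inr t') \<in> W" for t'
    using matching_right_unique[OF W that pair] by simp
qed

lemma partner_in_B:
  assumes W: "matching W" and s: "s \<in> S_part W" and sb: "\<sigma> s = Inr b"
  shows "(Inl s, Inr (partner W s)) \<in> W" "\<tau> (partner W s) = Inl b"
proof -
  obtain q where q: "(Inl s, q) \<in> W" using s unfolding S_part_def by blast
  obtain t where t: "q = Inr t" "\<tau> t = Inl b" using sync_S_B[OF matching_sync[OF W q] sb] by blast
  then have "partner W s = t" using partner_eq[OF W] q by simp
  then show "(Inl s, Inr (partner W s)) \<in> W" "\<tau> (partner W s) = Inl b" using q t by simp_all
qed

lemma root_in_S_part: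
  assumes W: "matching W" and s: "s \<in> S_part W"
  shows "root S s \<in> S_part W" "minimal S (root S s)" "Le S (root S s) s"
proof -
  have "s \<in> Ev S" using S_part_Ev[OF W s] .
  then show "minimal S (root S s)" "Le S (root S s) s"
    using root_le[OF st_S] root_minimal[OF st_S] by simp_all
  then show "root S s \<in> S_part W" using S_part_down_closed[OF W s] by blast
qed

lemma root_partner_in:
  assumes W: "matching W" and s: "s \<in> S_part W"
  shows "(Inl (root S s), Inr (partner W (root S s))) \<in> W"
proof -
  obtain b where "\<sigma> (root S s) = Inr b" using minimal_S_Inr root_in_S_part[OF W s] by blast
  then show ?thesis using partner_in_B(1)[OF W root_in_S_part(1)[OF W s]] by simp
qed

text \<open>Every pair of an interaction lies in a thread, named by a minimal event of \<open>T\<close>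
  (an initial Opponent move in \<open>C\<close>). A move of \<open>S\<close> in \<open>A\<close> has no \<open>T\<close>-component; its thread
  is read off through the \<open>T\<close>-event synchronised with its root, which is a move in \<open>B\<close>.\<close>

definition thread_S :: "(('s + 'c) \<times> ('a + 't)) set \<Rightarrow> 's \<Rightarrow> 't" where
  "thread_S W s = root T (partner W (root S s))"

definition thread :: "(('s + 'c) \<times> ('a + 't)) set \<Rightarrow> (('s + 'c) \<times> ('a + 't)) \<Rightarrow> 't" where
  "thread W v = (case snd v of Inr t \<Rightarrow> root T t | Inl a \<Rightarrow> thread_S W (projl (fst v)))"

lemma thread_Inr [simp]: "thread W (p, Inr t) = root T t"
  by (simp add: thread_def)

lemma sync_descend_T:
  assumes W: "matching W" and pair: "(Inl s, Inr t) \<in> W"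
    and tb: "\<tau> t = Inl b" and pos: "pol B b"
  obtains s' t' where "(Inl s', Inr t') \<in> W" "Le S s' s" "imm T t' t"
proof -
  have sW: "s \<in> S_part W" and tW: "t \<in> T_part W"
    using pair unfolding S_part_def T_part_def by blast+
  have tE: "t \<in> Ev T" using T_part_Ev[OF W tW] .
  obtain b0 where "\<sigma> s = Inr b0" "\<tau> t = Inl b0"
    using sync_S_T[OF matching_sync[OF W pair]] by blast
  then have sb: "\<sigma> s = Inr b" using tb by simp
  have "\<not> minimal T t" using minimal_T_Inr tb by force
  then obtain t' where it: "imm T t' t" using exists_imm_below[OF es_T tE] by blast
  have "\<not> pol T t" using pos pol_\<tau>[OF tE] tb by simp
  then have "imm (par (dual B) C) (\<tau> t') (\<tau> t)"
    using sim_strategy_courteous[OF strat_\<tau>] it unfolding courteous_def by blast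
  then have "Le (par (dual B) C) (\<tau> t') (Inl b)" using tb by (simp add: imm_def lt_def)
  then obtain b' where tb': "\<tau> t' = Inl b'" and lebb: "Le B b' b"
    by (cases rule: Le_parE) auto
  obtain p' where p': "(p', Inr t') \<in> W"
    using T_part_down_closed[OF W tW] it unfolding T_part_def imm_def lt_def by blast
  obtain s'' where s'': "p' = Inl s''" "\<sigma> s'' = Inr b'"
    using sync_T_B[OF matching_sync[OF W p'] tb'] by blast
  have "Le (par (dual A) B) (Inr b') (\<sigma> s)" using sb lebb by simp
  then obtain s' where ss': "Le S s' s" "\<sigma> s' = Inr b'"
    using es_map_lift_down[OF es_S map_\<sigma> S_part_Ev[OF W sW]] by blast
  obtain q' where q': "(Inl s', q') \<in> W"
    using S_part_down_closed[OF W sW ss'(1)] unfolding S_part_def by blast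
  have "s' = s''" using matching_inj_\<sigma>[OF W q'] p' s'' ss'(2) by simp
  then show ?thesis using that p' s''(1) ss'(1) it by simp
qed

lemma sync_descend_S:
  assumes W: "matching W" and pair: "(Inl s, Inr t) \<in> W"
    and sb: "\<sigma> s = Inr b" and neg: "\<not> pol B b" and nm: "\<not> minimal S s"
  obtains s' t' where "(Inl s', Inr t') \<in> W" "imm S s' s" "Le T t' t"
proof -
  have sW: "s \<in> S_part W" and tW: "t \<in> T_part W"
    using pair unfolding S_part_def T_part_def by blast+
  have sE: "s \<in> Ev S" using S_part_Ev[OF W sW] .
  obtain b0 where "\<sigma> s = Inr b0" "\<tau> t = Inl b0"
    using sync_S_T[OF matching_sync[OF W pair]] by blast
  then have tb: "\<tau> t = Inl b" using sb by simp
  obtain s' where is': "imm S s' s" using exists_imm_below[OF es_S sE nm] by blast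
  have "\<not> pol S s" using neg pol_\<sigma>[OF sE] sb by simp
  then have "imm (par (dual A) B) (\<sigma> s') (\<sigma> s)"
    using sim_strategy_courteous[OF strat_\<sigma>] is' unfolding courteous_def by blast
  then have "Le (par (dual A) B) (\<sigma> s') (Inr b)" using sb by (simp add: imm_def lt_def)
  then obtain b' where sb': "\<sigma> s' = Inr b'" and leb: "Le B b' b"
    by (cases rule: Le_parE) auto
  obtain q' where q': "(Inl s', q') \<in> W"
    using S_part_down_closed[OF W sW] is' unfolding S_part_def imm_def lt_def by blast
  obtain t'' where t'': "q' = Inr t''" "\<tau> t'' = Inl b'"
    using sync_S_B[OF matching_sync[OF W q'] sb'] by blast
  have "Le (par (dual B) C) (Inl b') (\<tau> t)" using tb leb by simp
  then obtain t' where tt': "Le T t' t" "\<tau> t' = Inl b'"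
    using es_map_lift_down[OF es_T map_\<tau> T_part_Ev[OF W tW]] by blast
  obtain p' where p': "(p', Inr t') \<in> W"
    using T_part_down_closed[OF W tW tt'(1)] unfolding T_part_def by blast
  have "t'' = t'" using matching_inj_\<tau>[OF W _ p'] q' t'' tt'(2) by simp
  then show ?thesis using that q' t''(1) is' tt'(1) by simp
qed

text \<open>By
  courtesy, the immediate predecessor of a negative event maps to an immediate predecessor of
  its image, so descending to the roots one strategy at a time stays inside the interaction.\<close>

lemma thread_S_sync:
  assumes W: "matching W" and pair: "(Inl s, Inr t) \<in> W"
  shows "thread_S W s = root T t"
  using pair
proof (induction "card (down S s) + card (down T t)" arbitrary: s t rule: less_induct)
  case less
  have sE: "s \<in> Ev S" using S_part_Ev[OF W] less.prems unfolding S_part_def by blast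
  obtain b where sb: "\<sigma> s = Inr b" and tb: "\<tau> t = Inl b"
    using sync_S_T[OF matching_sync[OF W less.prems]] by blast
  have descend: "thread_S W s = root T t"
    if pair': "(Inl s', Inr t') \<in> W" and le: "Le S s' s" "Le T t' t"
      and smaller: "card (down S s') + card (down T t') < card (down S s) + card (down T t)"
    for s' t'
    using less.hyps[OF smaller pair'] root_eq_if_Le[OF es_S st_S le(1)]
      root_eq_if_Le[OF es_T st_T le(2)] unfolding thread_S_def by simp
  show ?case
  proof (cases "pol B b")
    case True
    then obtain s' t' where "(Inl s', Inr t') \<in> W" "Le S s' s" "imm T t' t"
      using sync_descend_T[OF W less.prems tb] by blast
    then show ?thesis
      using descend down_card_mono[OF es_S] down_card_strict_mono[OF es_T]
      by (force simp: imm_def lt_def)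
  next
    case False
    show ?thesis
    proof (cases "minimal S s")
      case True
      then show ?thesis
        using root_of_minimal[OF es_S st_S] partner_eq[OF W less.prems] unfolding thread_S_def
          by simp
    next
      case nm: False
      obtain s' t' where "(Inl s', Inr t') \<in> W" "imm S s' s" "Le T t' t"
        using sync_descend_S[OF W less.prems sb False nm] by blast
      then show ?thesis
        using descend down_card_strict_mono[OF es_S] down_card_mono[OF es_T]
        by (force simp: imm_def lt_def)
    qed
  qed
qed

lemma thread_Inl:
  assumes W: "matching W" and v: "(Inl s, q) \<in> W"
  shows "thread W (Inl s, q) = thread_S W s"
proof (cases q)
  case (Inl a)
  then show ?thesis by (simp add: thread_def)
next
  case (Inr t)
  then show ?thesis using thread_S_sync[OF W] v by simp
qed

lemma thread_S_eq_if_Le: "Le S s s' \<Longrightarrow> thread_S W s = thread_S W s'"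
  using root_eq_if_Le[OF es_S st_S] unfolding thread_S_def by simp

lemma thread_eq_if_Le_X:
  assumes W: "matching W" and v: "(p,q) \<in> W" and v': "(p',q') \<in> W" and le: "Le X p p'"
  shows "thread W (p,q) = thread W (p',q')"
  using le
proof (cases rule: Le_parE)
  case (Inl s s')
  have "thread W (p,q) = thread_S W s" using thread_Inl[OF W] v Inl by simp
  moreover have "thread W (p',q') = thread_S W s'" using thread_Inl[OF W] v' Inl by simp
  ultimately show ?thesis using thread_S_eq_if_Le \<open>Le S s s'\<close> by simp
next
  case (Inr c c')
  obtain t where t: "q = Inr t" "\<tau> t = Inr c" using sync_Inr_C matching_sync[OF W v] Inr by metis
  obtain t' where t': "q' = Inr t'" "\<tau> t' = Inr c'" using sync_Inr_C matching_sync[OF W v'] Inr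
    by metis
  have t'W: "t' \<in> T_part W" using v' t' unfolding T_part_def by blast
  have "Le (par (dual B) C) (Inr c) (\<tau> t')" using t' Inr by simp
  then obtain t'' where t'': "Le T t'' t'" "\<tau> t'' = Inr c"
    using es_map_lift_down[OF es_T map_\<tau> T_part_Ev[OF W t'W]] by blast
  obtain p'' where p'': "(p'', Inr t'') \<in> W"
    using T_part_down_closed[OF W t'W t''(1)] unfolding T_part_def by blast
  have "p'' = Inr c" using sync_T_C[OF matching_sync[OF W p''] t''(2)] .
  then have "t'' = t" using matching_right_unique[OF W] v Inr t p'' by auto
  then show ?thesis using root_eq_if_Le[OF es_T st_T] t'' t t' by simp
qed

lemma thread_eq_if_Le_Y:
  assumes W: "matching W" and v: "(p,q) \<in> W" and v': "(p',q') \<in> W" and le: "Le Y q q'"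
  shows "thread W (p,q) = thread W (p',q')"
  using le
proof (cases rule: Le_parE)
  case (Inl a a')
  obtain s where s: "p = Inl s" "\<sigma> s = Inl a" using sync_Inl_A matching_sync[OF W v] Inl by metis
  obtain s' where s': "p' = Inl s'" "\<sigma> s' = Inl a'" using sync_Inl_A matching_sync[OF W v'] Inl
    by metis
  have s'W: "s' \<in> S_part W" using v' s' unfolding S_part_def by blast
  have "Le (par (dual A) B) (Inl a) (\<sigma> s')" using s' Inl by simp
  then obtain s'' where s'': "Le S s'' s'" "\<sigma> s'' = Inl a"
    using es_map_lift_down[OF es_S map_\<sigma> S_part_Ev[OF W s'W]] by blast
  obtain q'' where q'': "(Inl s'', q'') \<in> W"
    using S_part_down_closed[OF W s'W s''(1)] unfolding S_part_def by blast
  have "q'' = Inl a" using sync_S_A[OF matching_sync[OF W q''] s''(2)] .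
  then have "s'' = s" using matching_left_unique[OF W] v Inl s q'' by auto
  then have "root S s = root S s'" using root_eq_if_Le[OF es_S st_S] s'' by simp
  moreover have "thread W (p,q) = thread_S W s" using thread_Inl[OF W] v s by simp
  moreover have "thread W (p',q') = thread_S W s'" using thread_Inl[OF W] v' s' by simp
  ultimately show ?thesis unfolding thread_S_def by simp
next
  case (Inr t t')
  then show ?thesis using root_eq_if_Le[OF es_T st_T] by simp
qed

lemma thread_rtrancl:
  assumes W: "matching W" and path: "(v, w) \<in> (sec_rel X Y W)\<^sup>*"
  shows "thread W v = thread W w"
  using path
proof (induction rule: rtrancl_induct)
  case base
  then show ?case by simp
next
  case (step y z)
  then have "y \<in> W" "z \<in> W" "Le X (fst y) (fst z) \<or> Le Y (snd y) (snd z)"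
    unfolding sec_rel_def lt_def by auto
  then have "thread W y = thread W z"
    using thread_eq_if_Le_X[OF W] thread_eq_if_Le_Y[OF W] by (metis prod.collapse)
  then show ?case using step.IH by simp
qed

lemma thread_mono:
  assumes W: "matching W" and W': "matching W'" and sub: "W \<subseteq> W'" and v: "v \<in> W"
  shows "thread W v = thread W' v"
proof (cases "snd v")
  case (Inl a)
  obtain p where vp: "v = (p, Inl a)" using Inl by (metis prod.collapse)
  obtain s where s: "p = Inl s" using sync_Inl_A matching_sync[OF W] v vp by metis
  have sW: "s \<in> S_part W" using v vp s unfolding S_part_def by blast
  have "partner W' (root S s) = partner W (root S s)"
    using partner_eq[OF W'] root_partner_in[OF W sW] sub by blast
  then show ?thesis using vp s by (simp add: thread_def thread_S_def)
qed (simp add: thread_def)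

lemma thread_initial:
  assumes W: "matching W" and v: "v \<in> W"
  obtains c where "(Inr c, Inr (thread W v)) \<in> W" "\<tau> (thread W v) = Inr c"
    "minimal T (thread W v)"
proof -
  have "\<exists>t\<in>T_part W. thread W v = root T t"
  proof (cases "snd v")
    case (Inr t)
    then have "(fst v, Inr t) \<in> W" using v by (metis prod.collapse)
    then show ?thesis using Inr unfolding T_part_def by (auto simp: thread_def)
  next
    case (Inl a)
    obtain p where vp: "v = (p, Inl a)" using Inl by (metis prod.collapse)
    obtain s where s: "p = Inl s" using sync_Inl_A matching_sync[OF W] v vp by metis
    have sW: "s \<in> S_part W" using v vp s unfolding S_part_def by blast
    then have "partner W (root S s) \<in> T_part W"
      using root_partner_in[OF W sW] unfolding T_part_def by blast
    then show ?thesis using vp s by (auto simp: thread_def thread_S_def)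
  qed
  then obtain t where tW: "t \<in> T_part W" and thr: "thread W v = root T t" by blast
  have tE: "t \<in> Ev T" using T_part_Ev[OF W tW] .
  have m: "minimal T (root T t)" using root_minimal[OF st_T tE] .
  obtain p where p: "(p, Inr (root T t)) \<in> W"
    using T_part_down_closed[OF W tW root_le[OF st_T tE]] unfolding T_part_def by blast
  obtain c where c: "\<tau> (root T t) = Inr c" using minimal_T_Inr[OF m] by blast
  have "p = Inr c" using sync_T_C[OF matching_sync[OF W p] c] .
  then show ?thesis using that m p c thr by simp
qed

text \<open>Distinct threads of a single-threaded strategy never play the same move, so a move
  of \<open>A\<close>, \<open>B\<close> or \<open>C\<close> determines its thread, even across different interactions.\<close>

lemma thread_S_eq_if_image_eq:
  assumes W1: "matching W1" and W2: "matching W2"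
    and s: "s \<in> S_part W1" and s': "s' \<in> S_part W2" and eq: "\<sigma> s = \<sigma> s'"
  shows "thread_S W1 s = thread_S W2 s'"
proof -
  have root_s: "root S s = root S s'"
    by (rule root_eq_if_image_eq[OF es_S st_S map_\<sigma> S_part_Ev[OF W1 s] S_part_Ev[OF W2 s'] eq])
  define s0 where "s0 = root S s"
  obtain b0 where b0: "\<sigma> s0 = Inr b0"
    using minimal_S_Inr[OF root_in_S_part(2)[OF W1 s]] unfolding s0_def by blast
  have s0W1: "s0 \<in> S_part W1" and s0W2: "s0 \<in> S_part W2"
    using root_in_S_part(1)[OF W1 s] root_in_S_part(1)[OF W2 s'] root_s
    unfolding s0_def by simp_all
  have "partner W1 s0 \<in> T_part W1" "partner W2 s0 \<in> T_part W2"
    using partner_in_B(1)[OF W1 s0W1 b0] partner_in_B(1)[OF W2 s0W2 b0]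
    unfolding T_part_def by blast+
  then have "root T (partner W1 s0) = root T (partner W2 s0)"
    using T_part_Ev[OF W1] T_part_Ev[OF W2]
    by (intro root_eq_if_image_eq[OF es_T st_T map_\<tau>])
      (simp_all add: partner_in_B(2)[OF W1 s0W1 b0] partner_in_B(2)[OF W2 s0W2 b0])
  then show ?thesis using root_s unfolding thread_S_def s0_def by simp
qed

lemma thread_cross:
  assumes W1: "matching W1" and W2: "matching W2"
    and v: "(p,q) \<in> W1" and v': "(p',q') \<in> W2" and share: "p = p' \<or> q = q'"
  shows "(p,q) = (p',q') \<or> thread W1 (p,q) = thread W2 (p',q')"
proof (cases q)
  case (Inl a)
  obtain s where s: "p = Inl s" "\<sigma> s = Inl a"
    using sync_Inl_A[OF matching_sync[OF W1 v[unfolded Inl]]] by blast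
  show ?thesis
  proof (cases "p = p'")
    case True
    then have "q' = Inl a" using sync_S_A[OF _ s(2)] matching_sync[OF W2 v'] s(1) by simp
    then show ?thesis using True Inl by simp
  next
    case False
    then have "(p', Inl a) \<in> W2" using v' share Inl by simp
    then obtain s' where s': "p' = Inl s'" "\<sigma> s' = Inl a"
      using sync_Inl_A[OF matching_sync[OF W2]] by blast
    have "s \<in> S_part W1" "s' \<in> S_part W2" using v v' s s' unfolding S_part_def by blast+
    then have "thread_S W1 s = thread_S W2 s'"
      using thread_S_eq_if_image_eq[OF W1 W2] s s' by simp
    then show ?thesis using thread_Inl[OF W1] thread_Inl[OF W2] v v' s s' by simp
  qed
next
  case (Inr t)
  show ?thesis
  proof (cases "q = q'")
    case True
    then have "q' = Inr t" using Inr by simp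
    then show ?thesis using Inr by simp
  next
    case False
    then have "g q' = g q" using matching_sync[OF W1 v] matching_sync[OF W2 v'] share by simp
    then obtain t' where t': "q' = Inr t'" "\<tau> t' = \<tau> t"
      using Inr by (cases q') (auto simp: lift_r_def)
    have "t \<in> T_part W1" "t' \<in> T_part W2"
      using v v' unfolding Inr t'(1) T_part_def by blast+
    then have "root T t = root T t'"
      by (rule root_eq_if_image_eq[OF es_T st_T map_\<tau> T_part_Ev[OF W1] T_part_Ev[OF W2]])
        (simp add: t')
    then show ?thesis using Inr t' by simp
  qed
qed

abbreviation "P \<equiv> pullback X Y f g"

lemma Ev_P: "\<theta> \<in> Ev P \<longleftrightarrow> secured_bij X Y f g \<theta> \<and> (\<exists>u. is_top X Y \<theta> u)"
  by (simp add: pullback_def Let_def)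

lemma Ev_P_matching: "\<theta> \<in> Ev P \<Longrightarrow> matching \<theta>"
  using Ev_P secured_bij_iff by blast

lemma is_top_top:
  assumes \<theta>: "\<theta> \<in> Ev P"
  shows "is_top X Y \<theta> (top X Y \<theta>)"
proof -
  obtain u where u: "is_top X Y \<theta> u" using \<theta> Ev_P by blast
  have acyc: "acyclic (sec_rel X Y \<theta>)" using \<theta> Ev_P secured_bij_iff by blast
  have "u' = u" if u': "is_top X Y \<theta> u'" for u'
  proof (rule ccontr)
    assume "u' \<noteq> u"
    moreover have "(u', u) \<in> (sec_rel X Y \<theta>)\<^sup>*" "(u, u') \<in> (sec_rel X Y \<theta>)\<^sup>*"
      using u u' unfolding is_top_def by blast+
    ultimately have "(u', u) \<in> (sec_rel X Y \<theta>)\<^sup>+" by (simp add: rtrancl_eq_or_trancl)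
    then have "(u', u') \<in> (sec_rel X Y \<theta>)\<^sup>+" using \<open>(u, u') \<in> _\<close> by (rule trancl_rtrancl_trancl)
    then show False using acyc unfolding acyclic_def by blast
  qed
  then have "top X Y \<theta> = u" unfolding top_def using u by (rule the_equality[rotated])
  then show ?thesis using u by simp
qed

lemma top_in: "\<theta> \<in> Ev P \<Longrightarrow> top X Y \<theta> \<in> \<theta>"
  using is_top_top unfolding is_top_def by blast

definition event_thread :: "(('s + 'c) \<times> ('a + 't)) set \<Rightarrow> 't" where
  "event_thread \<theta> = thread \<theta> (top X Y \<theta>)"

lemma thread_eq_event_thread:
  assumes \<theta>: "\<theta> \<in> Ev P" and v: "v \<in> \<theta>"
  shows "thread \<theta> v = event_thread \<theta>"
  using thread_rtrancl[OF Ev_P_matching[OF \<theta>]] is_top_top[OF \<theta>] v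
  unfolding is_top_def event_thread_def by blast

lemma initial_event:
  assumes m: "minimal T t0" and c: "\<tau> t0 = Inr c"
  shows "{(Inr c, Inr t0)} \<in> Ev P" "top X Y {(Inr c, Inr t0)} = (Inr c, Inr t0)"
proof -
  define u :: "('s + 'c) \<times> ('a + 't)" where "u = (Inr c, Inr t0)"
  have "minimal (par (dual B) C) (Inr c)" using es_map_minimal[OF es_T map_\<tau> m] c by simp
  then have "minimal C c" unfolding minimal_def by force
  then have "Inr ` {c} \<in> conf X" by (intro par_conf_Inr_image es_S minimal_singleton_conf es_C)
  moreover have "Inr ` {t0} \<in> conf Y"
    by (intro par_conf_Inr_image es_A minimal_singleton_conf es_T m)
  ultimately have "matching {u}" unfolding matching_def u_def using c
    by (simp add: lift_l_def lift_r_def)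
  moreover have no_edge: "sec_rel X Y {u} = {}" unfolding sec_rel_def lt_def by auto
  ultimately have "secured_bij X Y f g {u}" by (simp add: secured_bij_iff acyclic_def)
  moreover have "is_top X Y {u} u" unfolding is_top_def no_edge by simp
  ultimately have ev: "{u} \<in> Ev P" using Ev_P by blast
  then show "{(Inr c, Inr t0)} \<in> Ev P" unfolding u_def .
  show "top X Y {(Inr c, Inr t0)} = (Inr c, Inr t0)" using top_in[OF ev] unfolding u_def by simp
qed

abbreviation "SC \<equiv> strat_comp S T A C \<sigma> \<tau>"

lemma SC_simps:
  "Ev SC = {\<theta> \<in> Ev P. \<forall>b. f (fst (top X Y \<theta>)) \<noteq> Inr (Inl b)}"
  "Le SC \<theta> \<theta>' \<longleftrightarrow> \<theta> \<in> Ev SC \<and> \<theta>' \<in> Ev SC \<and> \<theta> \<subseteq> \<theta>'"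
  "Con SC \<Theta> \<longleftrightarrow> \<Theta> \<subseteq> Ev SC \<and> finite \<Theta> \<and> secured_bij X Y f g (\<Union>\<Theta>)"
  "pol SC \<theta> = pol X (fst (top X Y \<theta>))"
  by (auto simp: strat_comp_def pullback_def Let_def)

lemma initial_event_SC:
  assumes "minimal T t0" "\<tau> t0 = Inr c"
  shows "{(Inr c, Inr t0)} \<in> Ev SC"
  using initial_event[OF assms] by (simp add: SC_simps lift_l_def)

lemma initial_event_minimal_SC:
  assumes "minimal T t0" "\<tau> t0 = Inr c"
  shows "minimal SC {(Inr c, Inr t0)}"
proof -
  have "\<theta> \<noteq> {}" if "\<theta> \<in> Ev SC" for \<theta> using top_in that by (auto simp: SC_simps)
  then show ?thesis
    unfolding minimal_def using initial_event_SC[OF assms]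
      by (auto simp: SC_simps subset_singleton_iff)
qed

lemma initial_event_below:
  assumes \<theta>: "\<theta> \<in> Ev SC"
  obtains c where "\<tau> (event_thread \<theta>) = Inr c" "minimal T (event_thread \<theta>)"
    "Le SC {(Inr c, Inr (event_thread \<theta>))} \<theta>"
proof -
  have \<theta>P: "\<theta> \<in> Ev P" using \<theta> by (simp add: SC_simps)
  obtain c where "(Inr c, Inr (event_thread \<theta>)) \<in> \<theta>" "\<tau> (event_thread \<theta>) = Inr c"
    "minimal T (event_thread \<theta>)"
    using thread_initial[OF Ev_P_matching[OF \<theta>P] top_in[OF \<theta>P]] unfolding event_thread_def by blast
  then show ?thesis using that initial_event_SC \<theta> by (simp add: SC_simps)
qed

lemma minimal_SC_initial:
  assumes m: "minimal SC m"
  shows "\<exists>c. m = {(Inr c, Inr (event_thread m))} \<and> \<tau> (event_thread m) = Inr c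
    \<and> minimal T (event_thread m)"
proof -
  have "m \<in> Ev SC" using m unfolding minimal_def by blast
  then obtain c where "\<tau> (event_thread m) = Inr c" "minimal T (event_thread m)"
    "Le SC {(Inr c, Inr (event_thread m))} m"
    by (rule initial_event_below)
  then show ?thesis using m unfolding minimal_def by blast
qed

lemma negative_SC: "negative SC"
  unfolding negative_def
proof (intro allI impI)
  fix m assume "minimal SC m"
  then obtain c t0 where m: "m = {(Inr c, Inr t0)}" and c: "\<tau> t0 = Inr c" and t0: "minimal T t0"
    using minimal_SC_initial by blast
  have "t0 \<in> Ev T" using t0 unfolding minimal_def by blast
  then have "pol C c = pol T t0" using pol_\<tau> c by (metis par_simps(8))
  moreover have "\<not> pol T t0" using neg_T t0 unfolding negative_def by blast
  ultimately show "\<not> pol SC m" using initial_event(2)[OF t0 c] m by (simp add: SC_simps)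
qed

lemma thread_of_initial_below:
  assumes \<theta>: "\<theta> \<in> Ev SC" and t0: "minimal T t0" and below: "(Inr c, Inr t0) \<in> \<theta>"
  shows "t0 = event_thread \<theta>"
proof -
  have "\<theta> \<in> Ev P" using \<theta> by (simp add: SC_simps)
  then have "thread \<theta> (Inr c, Inr t0) = event_thread \<theta>" using thread_eq_event_thread below by blast
  then show ?thesis using root_of_minimal[OF es_T st_T t0] by simp
qed

lemma unique_minimal_below_SC:
  assumes \<theta>: "\<theta> \<in> Ev SC"
  shows "\<exists>!m. m \<in> down SC \<theta> \<and> minimal SC m"
proof -
  obtain c where c: "\<tau> (event_thread \<theta>) = Inr c" "minimal T (event_thread \<theta>)"
    and below: "Le SC {(Inr c, Inr (event_thread \<theta>))} \<theta>"
    using initial_event_below[OF \<theta>] by blast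
  show ?thesis
  proof (rule ex1I)
    show "{(Inr c, Inr (event_thread \<theta>))} \<in> down SC \<theta> \<and> minimal SC {(Inr c, Inr (event_thread \<theta>))}"
      using below initial_event_minimal_SC[OF c(2,1)] by (simp add: down_def)
  next
    fix m assume "m \<in> down SC \<theta> \<and> minimal SC m"
    moreover obtain c' where m: "m = {(Inr c', Inr (event_thread m))}"
      "\<tau> (event_thread m) = Inr c'" "minimal T (event_thread m)"
      using minimal_SC_initial calculation by blast
    ultimately have "(Inr c', Inr (event_thread m)) \<in> \<theta>" by (auto simp: down_def SC_simps)
    then have "event_thread m = event_thread \<theta>" using thread_of_initial_below[OF \<theta> m(3)] by blast
    then show "m = {(Inr c, Inr (event_thread \<theta>))}" using m c by simp
  qed
qed

lemma sec_rel_trancl_within_thread: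
  assumes U: "matching U" and sub: "W \<subseteq> U"
    and closed: "\<And>v. v \<in> U \<Longrightarrow> Q (thread U v) \<Longrightarrow> v \<in> W"
    and path: "(v, w) \<in> (sec_rel X Y U)\<^sup>+" and Qv: "Q (thread U v)"
  shows "(v, w) \<in> (sec_rel X Y W)\<^sup>+"
proof -
  have edge: "(a, b) \<in> sec_rel X Y W" if ab: "(a, b) \<in> sec_rel X Y U"
    and Qa: "Q (thread U a)" for a b
  proof -
    have "thread U a = thread U b" using thread_rtrancl[OF U] ab by blast
    then have "a \<in> W" "b \<in> W" using closed ab Qa unfolding sec_rel_def by auto
    then show ?thesis using ab unfolding sec_rel_def by auto
  qed
  show ?thesis
    using path
  proof (induction rule: trancl_induct)
    case (base y)
    then show ?case using edge Qv by blast
  next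
    case (step y z)
    have "thread U v = thread U y" using thread_rtrancl[OF U trancl_into_rtrancl[OF step.hyps(1)]] .
    then have "(y, z) \<in> sec_rel X Y W" using edge step.hyps(2) Qv by simp
    with step.IH show ?case by (rule trancl_into_trancl)
  qed
qed

end

locale thread_union = st_composition S T A B C \<sigma> \<tau>
  for S :: "'s essp" and T :: "'t essp"
    and A :: "('a, 'x) essp_scheme" and B :: "('b, 'y) essp_scheme" and C :: "('c, 'z) essp_scheme"
    and \<sigma> :: "'s \<Rightarrow> 'a + 'b" and \<tau> :: "'t \<Rightarrow> 'b + 'c" +
  fixes U1 U2 :: "(('s + 'c) \<times> ('a + 't)) set" and t1 t2 :: 't
  assumes secured_U1: "secured_bij X Y f g U1" and secured_U2: "secured_bij X Y f g U2"
    and threads_differ: "t1 \<noteq> t2"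
    and thread_U1: "\<And>v. v \<in> U1 \<Longrightarrow> v \<notin> U2 \<Longrightarrow> thread U1 v = t1"
    and thread_U2: "\<And>v. v \<in> U2 \<Longrightarrow> v \<notin> U1 \<Longrightarrow> thread U2 v = t2"
begin

lemma matching_U1: "matching U1" and matching_U2: "matching U2"
  using secured_U1 secured_U2 secured_bij_iff by blast+

lemma private_parts_disjoint:
  assumes v: "(p,q) \<in> U1" "(p,q) \<notin> U2" and v': "(p',q') \<in> U2" "(p',q') \<notin> U1"
    and share: "p = p' \<or> q = q'"
  shows False
  using thread_cross[OF matching_U1 matching_U2 v(1) v'(1) share] thread_U1[OF v] thread_U2[OF v']
    threads_differ v(2) v'(1) by auto

lemma Un_right_unique: "(p,q) \<in> U1 \<union> U2 \<Longrightarrow> (p,q') \<in> U1 \<union> U2 \<Longrightarrow> q = q'"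
  using matching_right_unique[OF matching_U1] matching_right_unique[OF matching_U2]
    private_parts_disjoint by blast

lemma Un_left_unique: "(p,q) \<in> U1 \<union> U2 \<Longrightarrow> (p',q) \<in> U1 \<union> U2 \<Longrightarrow> p = p'"
  using matching_left_unique[OF matching_U1] matching_left_unique[OF matching_U2]
    private_parts_disjoint by blast

lemma Un_sync: "(p,q) \<in> U1 \<union> U2 \<Longrightarrow> f p = g q"
  using matching_sync[OF matching_U1] matching_sync[OF matching_U2] by blast

lemma S_part_Un: "S_part (U1 \<union> U2) = S_part U1 \<union> S_part U2"
  and T_part_Un: "T_part (U1 \<union> U2) = T_part U1 \<union> T_part U2"
  unfolding S_part_def T_part_def by blast+

lemma S_part_Un_conf: "S_part (U1 \<union> U2) \<in> conf S"
  unfolding S_part_Un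
proof (rule single_threaded_conf_Un_label[where k = t2, OF es_S st_S
      S_part_conf[OF matching_U1] S_part_conf[OF matching_U2]
      thread_S_eq_if_Le[of _ _ U1] thread_S_eq_if_Le[of _ _ U2]])
  show "thread_S U1 s = thread_S U2 s" if "s \<in> S_part U1" "s \<in> S_part U2" for s
    using thread_S_eq_if_image_eq[OF matching_U1 matching_U2 that] by simp
  show "thread_S U1 s \<noteq> t2" if only: "s \<in> S_part U1" "s \<notin> S_part U2" for s
  proof -
    obtain q where "(Inl s, q) \<in> U1" "(Inl s, q) \<notin> U2" using only unfolding S_part_def by blast
    then show ?thesis using thread_U1 thread_Inl[OF matching_U1] threads_differ by force
  qed
  show "thread_S U2 s = t2" if only: "s \<in> S_part U2" "s \<notin> S_part U1" for s
  proof -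
    obtain q where "(Inl s, q) \<in> U2" "(Inl s, q) \<notin> U1" using only unfolding S_part_def by blast
    then show ?thesis using thread_U2 thread_Inl[OF matching_U2] by force
  qed
qed

lemma T_part_Un_conf: "T_part (U1 \<union> U2) \<in> conf T"
  unfolding T_part_Un
proof (rule single_threaded_conf_Un_label[where k = t2, OF es_T st_T
      T_part_conf[OF matching_U1] T_part_conf[OF matching_U2]
      root_eq_if_Le[OF es_T st_T] root_eq_if_Le[OF es_T st_T]])
  show "root T t \<noteq> t2" if only: "t \<in> T_part U1" "t \<notin> T_part U2" for t
  proof -
    obtain p where "(p, Inr t) \<in> U1" "(p, Inr t) \<notin> U2" using only unfolding T_part_def by blast
    then show ?thesis using thread_U1 threads_differ by force
  qed
  show "root T t = t2" if only: "t \<in> T_part U2" "t \<notin> T_part U1" for t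
  proof -
    obtain p where "(p, Inr t) \<in> U2" "(p, Inr t) \<notin> U1" using only unfolding T_part_def by blast
    then show ?thesis using thread_U2 by force
  qed
qed simp_all

lemma fst_Un_conf: "fst ` (U1 \<union> U2) \<in> conf X"
proof -
  have c1: "fst ` U1 \<in> conf X" and c2: "fst ` U2 \<in> conf X"
    using matching_fst_conf matching_U1 matching_U2 by blast+
  have "Inl -` fst ` (U1 \<union> U2) = S_part (U1 \<union> U2)" unfolding S_part_def by force
  then have "Con S (Inl -` fst ` (U1 \<union> U2))" using conf_Con[OF S_part_Un_conf] by simp
  have "Inr -` fst ` (U1 \<union> U2) \<subseteq> Inr -` \<tau> ` T_part (U1 \<union> U2)"
  proof
    fix c assume "c \<in> Inr -` fst ` (U1 \<union> U2)"
    then obtain q where q: "(Inr c, q) \<in> U1 \<union> U2" by force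
    obtain t where "q = Inr t" "\<tau> t = Inr c" using sync_Inr_C[OF Un_sync[OF q]] by blast
    then show "c \<in> Inr -` \<tau> ` T_part (U1 \<union> U2)" using q unfolding T_part_def by force
  qed
  moreover have "Con C (Inr -` \<tau> ` T_part (U1 \<union> U2))"
    using conf_Con[OF map_\<tau>_conf[OF T_part_Un_conf, THEN conjunct1]] by simp
  ultimately have "Con C (Inr -` fst ` (U1 \<union> U2))" using es_Con_subset[OF es_C] by blast
  moreover note \<open>Con S (Inl -` fst ` (U1 \<union> U2))\<close>
  ultimately have "Con X (fst ` U1 \<union> fst ` U2)"
    using conf_subset_Ev[OF c1] conf_subset_Ev[OF c2] by (simp add: image_Un)
  then show ?thesis using conf_Un[OF c1 c2] by (simp add: image_Un)
qed

lemma snd_Un_conf: "snd ` (U1 \<union> U2) \<in> conf Y"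
proof -
  have c1: "snd ` U1 \<in> conf Y" and c2: "snd ` U2 \<in> conf Y"
    using matching_snd_conf matching_U1 matching_U2 by blast+
  have "Inr -` snd ` (U1 \<union> U2) = T_part (U1 \<union> U2)" unfolding T_part_def by force
  then have "Con T (Inr -` snd ` (U1 \<union> U2))" using conf_Con[OF T_part_Un_conf] by simp
  have "Inl -` snd ` (U1 \<union> U2) \<subseteq> Inl -` \<sigma> ` S_part (U1 \<union> U2)"
  proof
    fix a assume "a \<in> Inl -` snd ` (U1 \<union> U2)"
    then obtain p where p: "(p, Inl a) \<in> U1 \<union> U2" by force
    obtain s where "p = Inl s" "\<sigma> s = Inl a" using sync_Inl_A[OF Un_sync[OF p]] by blast
    then show "a \<in> Inl -` \<sigma> ` S_part (U1 \<union> U2)" using p unfolding S_part_def by force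
  qed
  moreover have "Con A (Inl -` \<sigma> ` S_part (U1 \<union> U2))"
    using conf_Con[OF map_\<sigma>_conf[OF S_part_Un_conf, THEN conjunct1]] by simp
  ultimately have "Con A (Inl -` snd ` (U1 \<union> U2))" using es_Con_subset[OF es_A] by blast
  moreover note \<open>Con T (Inr -` snd ` (U1 \<union> U2))\<close>
  ultimately have "Con Y (snd ` U1 \<union> snd ` U2)"
    using conf_subset_Ev[OF c1] conf_subset_Ev[OF c2] by (simp add: image_Un)
  then show ?thesis using conf_Un[OF c1 c2] by (simp add: image_Un)
qed

lemma matching_Un: "matching (U1 \<union> U2)"
  unfolding matching_def
  using fst_Un_conf snd_Un_conf Un_right_unique Un_left_unique Un_sync by blast

text \<open>A cycle stays within the thread of its starting pair, hence within \<open>U1\<close> or \<open>U2\<close>.\<close>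

lemma acyclic_Un: "acyclic (sec_rel X Y (U1 \<union> U2))"
  unfolding acyclic_def
proof (intro allI notI)
  fix v assume cycle: "(v, v) \<in> (sec_rel X Y (U1 \<union> U2))\<^sup>+"
  have thread_Un: "thread (U1 \<union> U2) w = thread Ui w"
    if "w \<in> Ui" "Ui \<subseteq> U1 \<union> U2" "matching Ui" for w Ui
    using thread_mono[OF that(3) matching_Un that(2,1)] by simp
  show False
  proof (cases "thread (U1 \<union> U2) v = t2")
    case True
    have "w \<in> U2" if "w \<in> U1 \<union> U2" "thread (U1 \<union> U2) w = t2" for w
      using that thread_Un[of w U1] thread_U1[of w] matching_U1 threads_differ
        by (cases "w \<in> U2") auto
    then have "(v, v) \<in> (sec_rel X Y U2)\<^sup>+"
      using sec_rel_trancl_within_thread[OF matching_Un _ _ cycle, of U2 "\<lambda>t. t = t2"] True by blast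
    then show False using secured_U2 unfolding secured_bij_iff acyclic_def by blast
  next
    case False
    have "w \<in> U1" if "w \<in> U1 \<union> U2" "thread (U1 \<union> U2) w \<noteq> t2" for w
      using that thread_Un[of w U2] thread_U2[of w] matching_U2 by (cases "w \<in> U1") auto
    then have "(v, v) \<in> (sec_rel X Y U1)\<^sup>+"
      using sec_rel_trancl_within_thread[OF matching_Un _ _ cycle, of U1 "\<lambda>t. t \<noteq> t2"] False
        by blast
    then show False using secured_U1 unfolding secured_bij_iff acyclic_def by blast
  qed
qed

lemma secured_Un: "secured_bij X Y f g (U1 \<union> U2)"
  using matching_Un acyclic_Un secured_bij_iff by blast

end

context st_composition
begin

lemma event_threads_differ:
  assumes a1: "a1 \<in> Ev SC" and a2: "a2 \<in> Ev SC" and disj: "down SC a1 \<inter> down SC a2 = {}"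
  shows "event_thread a1 \<noteq> event_thread a2"
proof
  assume eq: "event_thread a1 = event_thread a2"
  obtain c1 where c1: "\<tau> (event_thread a1) = Inr c1" "Le SC {(Inr c1, Inr (event_thread a1))} a1"
    using initial_event_below[OF a1] by blast
  obtain c2 where c2: "\<tau> (event_thread a2) = Inr c2" "Le SC {(Inr c2, Inr (event_thread a2))} a2"
    using initial_event_below[OF a2] by blast
  have "{(Inr c1, Inr (event_thread a1))} \<in> down SC a1 \<inter> down SC a2"
    using c1 c2 eq by (simp add: down_def)
  then show False using disj by blast
qed

lemma thread_extension:
  assumes x: "insert a x \<in> conf SC" and v: "v \<in> \<Union>(insert a x)" "v \<notin> \<Union>x"
  shows "thread (\<Union>(insert a x)) v = event_thread a"
proof -
  have aP: "a \<in> Ev P" using conf_subset_Ev[OF x] by (simp add: SC_simps)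
  have "matching (\<Union>(insert a x))"
    using conf_Con[OF x] by (simp add: SC_simps secured_bij_iff)
  moreover have "v \<in> a" using v by blast
  ultimately show ?thesis
    using thread_mono[OF Ev_P_matching[OF aP]] thread_eq_event_thread[OF aP] by auto
qed

lemma compatible_extensions_SC:
  assumes e1: "extends SC x a1" and e2: "extends SC x a2"
    and disj: "down SC a1 \<inter> down SC a2 = {}"
  shows "insert a1 (insert a2 x) \<in> conf SC"
proof -
  have c1: "insert a1 x \<in> conf SC" and c2: "insert a2 x \<in> conf SC"
    using e1 e2 unfolding extends_def by blast+
  have evs: "insert a1 (insert a2 x) \<subseteq> Ev SC" using conf_subset_Ev[OF c1] conf_subset_Ev[OF c2]
    by blast
  interpret thread_union S T A B C \<sigma> \<tau> "\<Union>(insert a1 x)" "\<Union>(insert a2 x)"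
    "event_thread a1" "event_thread a2"
  proof
    show "secured_bij X Y f g (\<Union>(insert a1 x))" "secured_bij X Y f g (\<Union>(insert a2 x))"
      using conf_Con[OF c1] conf_Con[OF c2] by (simp_all add: SC_simps)
    show "event_thread a1 \<noteq> event_thread a2" using event_threads_differ evs disj by simp
    show "thread (\<Union>(insert a1 x)) v = event_thread a1"
      if "v \<in> \<Union>(insert a1 x)" "v \<notin> \<Union>(insert a2 x)" for v
      using thread_extension[OF c1] that by blast
    show "thread (\<Union>(insert a2 x)) v = event_thread a2"
      if "v \<in> \<Union>(insert a2 x)" "v \<notin> \<Union>(insert a1 x)" for v
      using thread_extension[OF c2] that by blast
  qed
  have "\<Union>(insert a1 (insert a2 x)) = \<Union>(insert a1 x) \<union> \<Union>(insert a2 x)" by blast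
  then have "Con SC (insert a1 (insert a2 x))"
    using secured_Un evs conf_finite[OF c1] by (simp add: SC_simps)
  moreover have "b \<in> insert a1 (insert a2 x)"
    if "b' \<in> insert a1 (insert a2 x)" "Le SC b b'" for b b'
    using that conf_down_closed[OF c1] conf_down_closed[OF c2] by blast
  ultimately show ?thesis using conf_finite[OF c1] evs by (intro confI) auto
qed

lemma single_threaded_SC: "single_threaded SC"
  unfolding single_threaded_def
  using unique_minimal_below_SC compatible_extensions_SC by blast

end

theorem mainTheorem11:
  fixes S :: "'s essp" and T :: "'t essp"
    and A :: "'a tcg" and B :: "'b tcg" and C :: "'c tcg"
    and \<sigma> :: "'s \<Rightarrow> 'a + 'b" and \<tau> :: "'t \<Rightarrow> 'b + 'c"
  assumes "is_tcg A" and "is_tcg B" and "is_tcg C"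
    and "negative A" and "negative B" and "negative C"
    and "sim_strategy S (par (dual A) B) \<sigma>" and "sim_strategy T (par (dual B) C) \<tau>"
    and "negative S" and "negative T"
    and "single_threaded S" and "single_threaded T"
  shows "negative (strat_comp S T A C \<sigma> \<tau>) \<and> single_threaded (strat_comp S T A C \<sigma> \<tau>)"
proof -
  interpret st_composition S T A B C \<sigma> \<tau>
    using tcg_is_es[OF \<open>is_tcg A\<close>] tcg_is_es[OF \<open>is_tcg C\<close>] assms by unfold_locales
  show ?thesis using negative_SC single_threaded_SC by blast
qed

end
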